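(* Let $S$ be any string of length $n$ satisfying the $\varepsilon$-self-matching property. Then $S$ together with the minimum relative suffix distance decoding algorithm is an $(n,\delta)$-indexing algorithm with at most $n(4\delta+6\varepsilon)$ misdecodings.
   Context: $\mathrm{ED}$ is insertion/deletion edit distance; $S[i,j]$ is positions $i..j$, $S(i,j]=S[i+1,j]$, and for $i<1$, $S[i,j]=\bot^{-i+1}S[1,j]$ with $\bot$ not in the alphabet. $\mathrm{RSD}(S,S')=\max_{k>0}\frac{\mathrm{ED}(S(|S|-k,|S|],S'(|S'|-k,|S'|])}{2k}$. A monotone matching between $S$ and itself is a set of pairs $(a_1,b_1),\dots,(a_m,b_m)$ with $a_1<\dots<a_m$, $b_1<\dots<b_m$, $S[a_i]=S[b_i]$; a pair is bad if $a_i\ne b_i$. $S$ satisfies the $\varepsilon$-self-matching property if every such matching has fewer than $\varepsilon|S|$ bad pairs. Indexing problem: an adversary applies at most $n\delta$ insertions and deletions to $S$, producing $S_\tau$, with an order-preserving alignment in which each $S[i]$ is deleted or delivered unchanged as a unique symbol of $S_\tau$, and other symbols of $S_\tau$ are inserted. An $(n,\delta)$-indexing algorithm outputs for each position of $S_\tau$ either $\bot$ or an index in $\{1,\dots,n\}$; a successfully transmitted position (delivered from $S[i]$) is correctly decoded if the output is $i$; the algorithm has at most $k$ misdecodings if for every such corruption at most $k$ successfully transmitted positions are not correctly decoded. The minimum relative suffix distance decoding algorithm outputs for position $j$ of $S_\tau$ an index $l$ minimizing $\mathrm{RSD}(S[1,l],S_\tau[1,j])$. *)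

theory Defs
  imports Main Complex_Main
begin

fun ED :: "'a list \<Rightarrow> 'a list \<Rightarrow> nat" where
  "ED [] ys = length ys"
| "ED xs [] = length xs"
| "ED (x # xs) (y # ys) =
     min (if x = y then ED xs ys else Suc (ED xs (y # ys)))
         (min (Suc (ED xs (y # ys))) (Suc (ED (x # xs) ys)))"

(* S(|S|-k,|S|], padded on the left with \<bottom> = None when k > |S| *)
definition suffix_pad :: "'a list \<Rightarrow> nat \<Rightarrow> 'a option list" where
  "suffix_pad S k = (let P = replicate k None @ map Some S in drop (length P - k) P)"

definition RSD :: "'a list \<Rightarrow> 'a list \<Rightarrow> real" where
  "RSD S S' = (SUP k\<in>{k::nat. k > 0}. real (ED (suffix_pad S k) (suffix_pad S' k)) / (2 * real k))"

(* monotone matching between S and itself; positions are 1-based *)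
definition monotone_self_matching :: "'a list \<Rightarrow> (nat \<times> nat) set \<Rightarrow> bool" where
  "monotone_self_matching S M \<longleftrightarrow>
     M \<subseteq> {1..length S} \<times> {1..length S} \<and>
     (\<forall>(a,b)\<in>M. S ! (a - 1) = S ! (b - 1)) \<and>
     (\<forall>(a,b)\<in>M. \<forall>(a',b')\<in>M. a < a' \<longleftrightarrow> b < b')"

definition self_matching :: "real \<Rightarrow> 'a list \<Rightarrow> bool" where
  "self_matching \<epsilon> S \<longleftrightarrow>
     (\<forall>M. monotone_self_matching S M \<longrightarrow>
        real (card {(a,b)\<in>M. a \<noteq> b}) < \<epsilon> * real (length S))"

(* A corruption of S into S\<tau> with at most n*\<delta> insertions and deletions:
   D \<subseteq> {1..n} is the set of delivered positions, f i the (1-based) position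
   in S\<tau> of the delivered copy of S[i]; f is strictly increasing on D. *)
definition valid_corruption :: "real \<Rightarrow> 'a list \<Rightarrow> 'a list \<Rightarrow> nat set \<Rightarrow> (nat \<Rightarrow> nat) \<Rightarrow> bool" where
  "valid_corruption \<delta> S St D f \<longleftrightarrow>
     D \<subseteq> {1..length S} \<and>
     f ` D \<subseteq> {1..length St} \<and>
     strict_mono_on D f \<and>
     (\<forall>i\<in>D. St ! (f i - 1) = S ! (i - 1)) \<and>
     real ((length S - card D) + (length St - card D)) \<le> real (length S) * \<delta>"

definition min_RSD_decoding :: "'a list \<Rightarrow> 'a list \<Rightarrow> (nat \<Rightarrow> nat) \<Rightarrow> bool" where
  "min_RSD_decoding S St dec \<longleftrightarrow>
     (\<forall>j\<in>{1..length St}. dec j \<in> {1..length S} \<and>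
        (\<forall>l\<in>{1..length S}. RSD (take (dec j) S) (take j St) \<le> RSD (take l S) (take j St)))"

end

theory Submission
  imports Defs
begin

(* Split the misdecoded positions i (delivered at f i, decoded as l ~= i) according to
   r = RSD(S[1,i], S_tau[1,f i]).

   If r > 1/4, some pair of suffix windows of length k ending at i and f i has edit distance
   more than k/2.  The positions delivered inside both windows align the two suffixes, so more
   than k/4 positions of the windows are deleted or inserted.  Covering greedily from the right
   charges each edit to at most four such i, which gives at most 4 n delta of them.

   If r <= 1/4, minimality of the decoding gives RSD(S[1,l], S_tau[1,f i]) <= 1/4 as well, so
   the suffixes of length g = |i - l| of S[1,i] and of S[1,l] are both within distance g/2 of
   the same string.  Composing the two alignments matches at least g/2 symbols of S across the
   window boundary min(i,l).  Packing these windows greedily, largest first, yields one monotone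
   self-matching of S, all of whose pairs are bad, of size at least a sixth of the number of
   such i; the self-matching property bounds it by n epsilon. *)

section \<open>Matchings and edit distance\<close>

definition monotone_pairs :: "(nat \<times> nat) set \<Rightarrow> bool" where
  "monotone_pairs M \<longleftrightarrow> (\<forall>a b a' b'. (a, b) \<in> M \<longrightarrow> (a', b') \<in> M \<longrightarrow> a < a' \<longleftrightarrow> b < b')"

lemma monotone_pairsD: "monotone_pairs M \<Longrightarrow> (a, b) \<in> M \<Longrightarrow> (a', b') \<in> M \<Longrightarrow> a < a' \<longleftrightarrow> b < b'"
  unfolding monotone_pairs_def by blast

lemma monotone_pairs_fst_inj: "monotone_pairs M \<Longrightarrow> (a, b) \<in> M \<Longrightarrow> (a, b') \<in> M \<Longrightarrow> b = b'"
  by (metis monotone_pairsD less_irrefl nat_neq_iff)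

lemma monotone_pairs_snd_inj: "monotone_pairs M \<Longrightarrow> (a, b) \<in> M \<Longrightarrow> (a', b) \<in> M \<Longrightarrow> a = a'"
  by (metis monotone_pairsD less_irrefl nat_neq_iff)

(* Positions are 0-based here, unlike in monotone_self_matching. *)
definition list_matching :: "'a list \<Rightarrow> 'a list \<Rightarrow> (nat \<times> nat) set \<Rightarrow> bool" where
  "list_matching xs ys M \<longleftrightarrow>
     (\<forall>a b. (a, b) \<in> M \<longrightarrow> a < length xs \<and> b < length ys \<and> xs ! a = ys ! b) \<and> monotone_pairs M"

lemma list_matchingD:
  "list_matching xs ys M \<Longrightarrow> (a, b) \<in> M \<Longrightarrow> a < length xs \<and> b < length ys \<and> xs ! a = ys ! b"
  unfolding list_matching_def by blast

lemma list_matching_monotone: "list_matching xs ys M \<Longrightarrow> monotone_pairs M"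
  unfolding list_matching_def by blast

lemma list_matching_finite: "list_matching xs ys M \<Longrightarrow> finite M"
  unfolding list_matching_def
  by (rule finite_subset[of _ "{..<length xs} \<times> {..<length ys}"]) auto

lemma list_matching_empty[simp]: "list_matching xs ys {}"
  by (simp add: list_matching_def monotone_pairs_def)

lemma list_matching_vimage_Suc_id:
  "list_matching (x # xs) ys M \<Longrightarrow> list_matching xs ys (map_prod Suc id -` M)"
  unfolding list_matching_def[of xs] monotone_pairs_def
  by (auto dest: list_matchingD monotone_pairsD[OF list_matching_monotone])

lemma list_matching_vimage_id_Suc:
  "list_matching xs (y # ys) M \<Longrightarrow> list_matching xs ys (map_prod id Suc -` M)"
  unfolding list_matching_def[of xs] monotone_pairs_def
  by (auto dest: list_matchingD monotone_pairsD[OF list_matching_monotone])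

lemma list_matching_vimage_Suc_Suc:
  "list_matching (x # xs) (y # ys) M \<Longrightarrow> list_matching xs ys (map_prod Suc Suc -` M)"
  unfolding list_matching_def[of xs] monotone_pairs_def
  by (auto dest: list_matchingD monotone_pairsD[OF list_matching_monotone])

lemma list_matching_image_Suc_id:
  "list_matching xs ys M \<Longrightarrow> list_matching (x # xs) ys (map_prod Suc id ` M)"
  unfolding list_matching_def monotone_pairs_def by auto

lemma list_matching_image_id_Suc:
  "list_matching xs ys M \<Longrightarrow> list_matching xs (y # ys) (map_prod id Suc ` M)"
  unfolding list_matching_def monotone_pairs_def by auto

lemma list_matching_insert_Cons:
  "list_matching xs ys M \<Longrightarrow> list_matching (x # xs) (x # ys) (insert (0, 0) (map_prod Suc Suc ` M))"
  unfolding list_matching_def monotone_pairs_def by auto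

lemma mem_range_map_prod_Suc_id: "p \<in> range (map_prod Suc id) \<longleftrightarrow> fst p \<noteq> 0"
  by (cases p; cases "fst p") (auto simp: image_iff)

lemma mem_range_map_prod_id_Suc: "p \<in> range (map_prod id Suc) \<longleftrightarrow> snd p \<noteq> 0"
  by (cases p; cases "snd p") (auto simp: image_iff)

lemma mem_range_map_prod_Suc_Suc: "p \<in> range (map_prod Suc Suc) \<longleftrightarrow> fst p \<noteq> 0 \<and> snd p \<noteq> 0"
  by (cases p; cases "fst p"; cases "snd p") (auto simp: image_iff)

lemma card_image_map_prod: "inj f \<Longrightarrow> inj g \<Longrightarrow> card (map_prod f g ` M) = card M"
  by (rule card_image) (rule inj_on_subset[OF prod.inj_map], auto)

lemma card_vimage_map_prod:
  "inj f \<Longrightarrow> inj g \<Longrightarrow> M \<subseteq> range (map_prod f g) \<Longrightarrow> card (map_prod f g -` M) = card M"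
  by (rule card_vimage_inj) (rule prod.inj_map)

lemma monotone_pairs_zero_zero:
  assumes "monotone_pairs M" "(0, b) \<in> M" "(a, 0) \<in> M"
  shows "(0, 0) \<in> M" and "M - {(0, 0)} \<subseteq> range (map_prod Suc Suc)"
proof -
  show z: "(0, 0) \<in> M"
    using monotone_pairsD[OF assms] assms(2,3) by (cases a; cases b) auto
  show "M - {(0, 0)} \<subseteq> range (map_prod Suc Suc)"
    using monotone_pairsD[OF assms(1) _ z] monotone_pairsD[OF assms(1) z]
    by (fastforce simp: mem_range_map_prod_Suc_Suc)
qed

lemma ED_add_card_matching_le:
  "list_matching xs ys M \<Longrightarrow> ED xs ys + 2 * card M \<le> length xs + length ys"
proof (induction xs ys arbitrary: M rule: ED.induct)
  case (1 ys)
  then have "M = {}" by (auto simp: list_matching_def)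
  then show ?case by simp
next
  case (2 x xs)
  then have "M = {}" by (auto simp: list_matching_def)
  then show ?case by simp
next
  case (3 x xs y ys)
  have mono: "monotone_pairs M" using "3.prems" by (simp add: list_matching_def)
  show ?case
  proof (cases "\<exists>b. (0, b) \<in> M")
    case False
    then have "card (map_prod Suc id -` M) = card M"
      by (intro card_vimage_map_prod inj_Suc inj_on_id) (fastforce simp: mem_range_map_prod_Suc_id)
    moreover have "ED xs (y # ys) + 2 * card (map_prod Suc id -` M) \<le> length xs + length (y # ys)"
      using "3.IH"(3) list_matching_vimage_Suc_id[OF "3.prems"] by blast
    ultimately show ?thesis by simp
  next
    case a0: True
    show ?thesis
    proof (cases "\<exists>a. (a, 0) \<in> M")
      case False
      then have "card (map_prod id Suc -` M) = card M"
        by (intro card_vimage_map_prod inj_Suc inj_on_id) (fastforce simp: mem_range_map_prod_id_Suc)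
      moreover have "ED (x # xs) ys + 2 * card (map_prod id Suc -` M) \<le> length (x # xs) + length ys"
        using "3.IH"(4) list_matching_vimage_id_Suc[OF "3.prems"] by blast
      ultimately show ?thesis by simp
    next
      case True
      with a0 obtain a b where "(0, b) \<in> M" "(a, 0) \<in> M" by blast
      note zz = monotone_pairs_zero_zero[OF mono this]
      have "x = y" using zz(1) "3.prems" by (force simp: list_matching_def)
      have "map_prod Suc Suc -` M = map_prod Suc Suc -` (M - {(0, 0)})" by auto
      then have "card (map_prod Suc Suc -` M) = card (M - {(0, 0)})"
        using zz(2) by (simp add: card_vimage_map_prod)
      moreover have "ED xs ys + 2 * card (map_prod Suc Suc -` M) \<le> length xs + length ys"
        using "3.IH"(1) \<open>x = y\<close> list_matching_vimage_Suc_Suc[OF "3.prems"] by blast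
      moreover have "card M = Suc (card (M - {(0, 0)}))"
        by (rule card_Suc_Diff1[symmetric, OF list_matching_finite[OF "3.prems"] zz(1)])
      ultimately show ?thesis using \<open>x = y\<close> by simp
    qed
  qed
qed

lemma ED_le_length_add: "ED xs ys \<le> length xs + length ys"
  using ED_add_card_matching_le[of xs ys "{}"] by simp

lemma ED_Cons_Cons_cases:
  obtains "x = y" "ED (x # xs) (y # ys) = ED xs ys"
  | "ED (x # xs) (y # ys) = Suc (ED xs (y # ys))"
  | "ED (x # xs) (y # ys) = Suc (ED (x # xs) ys)"
proof -
  let ?d = "Suc (ED xs (y # ys))" and ?i = "Suc (ED (x # xs) ys)"
  have min3: "min a (min b c) = a \<or> min a (min b c) = b \<or> min a (min b c) = c" for a b c :: nat
    by linarith
  have "ED (x # xs) (y # ys) = min (if x = y then ED xs ys else ?d) (min ?d ?i)"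
    by simp
  then show thesis
    using that min3[of "if x = y then ED xs ys else ?d" ?d ?i] by (cases "x = y") auto
qed
lemma ex_matching_ED_le:
  "\<exists>M. list_matching xs ys M \<and> length xs + length ys \<le> ED xs ys + 2 * card M"
proof (induction xs ys rule: ED.induct)
  case (1 ys)
  show ?case by (intro exI[of _ "{}"]) simp
next
  case (2 x xs)
  show ?case by (intro exI[of _ "{}"]) simp
next
  case (3 x xs y ys)
  show ?case
  proof (cases rule: ED_Cons_Cons_cases[of x y xs ys])
    case 1
    then obtain M where M: "list_matching xs ys M" "length xs + length ys \<le> ED xs ys + 2 * card M"
      using "3.IH"(1) by blast
    have "card (insert (0, 0) (map_prod Suc Suc ` M)) = Suc (card M)"
      using list_matching_finite[OF M(1)] by (subst card_insert_disjoint) (auto simp: card_image_map_prod)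
    then show ?thesis
      using list_matching_insert_Cons[OF M(1), of x] M(2) 1 by (intro exI) auto
  next
    case 2
    then obtain M where M: "list_matching xs (y # ys) M"
      "length xs + length (y # ys) \<le> ED xs (y # ys) + 2 * card M"
      using "3.IH"(3) by blast
    then show ?thesis
      using list_matching_image_Suc_id[OF M(1), of x] 2
      by (intro exI) (auto simp: card_image_map_prod)
  next
    case 3
    then obtain M where M: "list_matching (x # xs) ys M"
      "length (x # xs) + length ys \<le> ED (x # xs) ys + 2 * card M"
      using "3.IH"(4) by blast
    then show ?thesis
      using list_matching_image_id_Suc[OF M(1), of y] 3
      by (intro exI) (auto simp: card_image_map_prod)
  qed
qed

text \<open>At least \<open>card M1 + card M2 - length ys\<close> targets are hit by both matchings, and each
  of them yields a pair of the composite.\<close>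
lemma list_matching_compose:
  assumes m1: "list_matching xs ys M1" and m2: "list_matching zs ys M2"
  shows "\<exists>N. list_matching xs zs N \<and> card M1 + card M2 \<le> card N + length ys"
proof -
  define N where "N = {(a, c). \<exists>b. (a, b) \<in> M1 \<and> (c, b) \<in> M2}"
  note mono1 = list_matching_monotone[OF m1] and mono2 = list_matching_monotone[OF m2]
  have N: "list_matching xs zs N"
    unfolding list_matching_def monotone_pairs_def N_def
    using list_matchingD[OF m1] list_matchingD[OF m2] monotone_pairsD[OF mono1] monotone_pairsD[OF mono2]
    by fastforce
  have c1: "card (snd ` M1) = card M1"
    using monotone_pairs_snd_inj[OF mono1] by (intro card_image) (auto simp: inj_on_def)
  have c2: "card (snd ` M2) = card M2"
    using monotone_pairs_snd_inj[OF mono2] by (intro card_image) (auto simp: inj_on_def)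
  have "snd ` M1 \<union> snd ` M2 \<subseteq> {..<length ys}"
    using list_matchingD[OF m1] list_matchingD[OF m2] by force
  then have cu: "card (snd ` M1 \<union> snd ` M2) \<le> length ys"
    by (metis card_lessThan card_mono finite_lessThan)
  have "snd ` M1 \<inter> snd ` M2 \<subseteq> (\<lambda>(a, c). THE b. (a, b) \<in> M1) ` N"
  proof
    fix b assume "b \<in> snd ` M1 \<inter> snd ` M2"
    then obtain a c where "(a, b) \<in> M1" "(c, b) \<in> M2" by force
    moreover have "(THE b. (a, b) \<in> M1) = b"
      using \<open>(a, b) \<in> M1\<close> monotone_pairs_fst_inj[OF mono1] by blast
    ultimately show "b \<in> (\<lambda>(a, c). THE b. (a, b) \<in> M1) ` N"
      unfolding N_def by force
  qed
  then have "card (snd ` M1 \<inter> snd ` M2) \<le> card N"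
    using card_mono[OF finite_imageI[OF list_matching_finite[OF N]]] card_image_le[OF list_matching_finite[OF N]]
    by (meson le_trans)
  moreover have "card (snd ` M1 \<union> snd ` M2) + card (snd ` M1 \<inter> snd ` M2) = card M1 + card M2"
    using card_Un_Int[of "snd ` M1" "snd ` M2"] list_matching_finite[OF m1] list_matching_finite[OF m2] c1 c2
    by simp
  ultimately show ?thesis using N cu by (intro exI[of _ N]) linarith
qed

section \<open>Relative suffix distance\<close>

lemma length_suffix_pad[simp]: "length (suffix_pad xs k) = k"
  unfolding suffix_pad_def Let_def by simp

lemma nth_suffix_pad_take:
  "x \<le> length xs \<Longrightarrow> t < k \<Longrightarrow>
     suffix_pad (take x xs) k ! t = (if k \<le> t + x then Some (xs ! (t + x - k)) else None)"
  unfolding suffix_pad_def Let_def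
  by (auto simp: nth_append min_def intro!: arg_cong[where f = "nth xs"])

definition suffix_ratio :: "'a list \<Rightarrow> 'a list \<Rightarrow> nat \<Rightarrow> real" where
  "suffix_ratio X Y k = real (ED (suffix_pad X k) (suffix_pad Y k)) / (2 * real k)"

lemma suffix_ratio_le_1: "suffix_ratio X Y k \<le> 1"
proof -
  have "real (ED (suffix_pad X k) (suffix_pad Y k)) \<le> 2 * real k"
    using ED_le_length_add[of "suffix_pad X k" "suffix_pad Y k"] by simp
  then show ?thesis unfolding suffix_ratio_def by (cases "k = 0") (simp_all add: divide_le_eq)
qed

lemma RSD_eq_SUP_suffix_ratio: "RSD X Y = (SUP k\<in>{k. 0 < k}. suffix_ratio X Y k)"
  unfolding RSD_def suffix_ratio_def by simp

lemma bdd_above_suffix_ratio: "bdd_above (suffix_ratio X Y ` K)"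
  by (rule bdd_aboveI[of _ 1]) (auto intro: suffix_ratio_le_1)

lemma suffix_ratio_le_RSD: "0 < k \<Longrightarrow> suffix_ratio X Y k \<le> RSD X Y"
  unfolding RSD_eq_SUP_suffix_ratio by (rule cSUP_upper) (auto intro: bdd_above_suffix_ratio)

lemma less_RSD_iff: "c < RSD X Y \<longleftrightarrow> (\<exists>k>0. c < suffix_ratio X Y k)"
  unfolding RSD_eq_SUP_suffix_ratio
  by (subst less_cSUP_iff) (auto intro: bdd_above_suffix_ratio)

section \<open>Misdecodings at large relative suffix distance\<close>

lemma card_Diff_split_interval:
  fixes a b A :: int
  assumes "a \<le> b" "b \<le> A" "finite ({..A} - K)"
  shows "card ({..a} - K) + card ({a<..b} - K) \<le> card ({..A} - K)"
proof -
  have "finite ({..a} - K)" "finite ({a<..b} - K)"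
    using assms by (auto intro: finite_subset[OF _ assms(3)])
  then have "card (({..a} - K) \<union> ({a<..b} - K)) = card ({..a} - K) + card ({a<..b} - K)"
    by (intro card_Un_disjoint) auto
  moreover have "({..a} - K) \<union> ({a<..b} - K) \<subseteq> {..A} - K" using assms by auto
  ultimately show ?thesis using assms(3) by (metis card_mono)
qed

text \<open>The alignment of a corruption, extended to all of \<open>\<int>\<close>: \<open>K\<close> is the set of delivered
  positions and \<open>F\<close> sends each of them to its position in the received string.\<close>
locale monotone_alignment =
  fixes K :: "int set" and F :: "int \<Rightarrow> int"
  assumes strict_mono: "strict_mono_on K F"
    and finite_deleted: "finite (- K)"
    and finite_inserted: "finite (- F ` K)"
begin

lemma less_iff: "x \<in> K \<Longrightarrow> y \<in> K \<Longrightarrow> F x < F y \<longleftrightarrow> x < y"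
  using strict_mono unfolding strict_mono_on_def by (metis not_less_iff_gr_or_eq order_less_asym)

lemma le_iff: "x \<in> K \<Longrightarrow> y \<in> K \<Longrightarrow> F x \<le> F y \<longleftrightarrow> x \<le> y"
  by (meson less_iff not_less)

lemma inj: "inj_on F K"
  using strict_mono by (rule strict_mono_on_imp_inj_on)

definition kept_src :: "int \<Rightarrow> nat \<Rightarrow> int set" where
  "kept_src p k = {p - int k<..p} \<inter> K"

definition kept_dst :: "int \<Rightarrow> nat \<Rightarrow> int set" where
  "kept_dst p k = {x \<in> K. F x \<in> {F p - int k<..F p}}"

definition deleted :: "int \<Rightarrow> nat \<Rightarrow> nat" where
  "deleted p k = card ({p - int k<..p} - K)"

definition inserted :: "int \<Rightarrow> nat \<Rightarrow> nat" where
  "inserted p k = card ({F p - int k<..F p} - F ` K)"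

lemma card_kept_src: "card (kept_src p k) + deleted p k = k"
  using card_Int_Diff[of "{p - int k<..p}" K] unfolding kept_src_def deleted_def by simp

lemma card_kept_dst: "card (kept_dst p k) + inserted p k = k"
proof -
  have "F ` kept_dst p k = {F p - int k<..F p} \<inter> F ` K" unfolding kept_dst_def by auto
  moreover have "card (F ` kept_dst p k) = card (kept_dst p k)"
    using inj by (rule card_image[OF inj_on_subset]) (auto simp: kept_dst_def)
  ultimately show ?thesis
    using card_Int_Diff[of "{F p - int k<..F p}" "F ` K"] unfolding inserted_def by simp
qed

lemma finite_kept_src: "finite (kept_src p k)"
  unfolding kept_src_def by simp

lemma finite_kept_dst: "finite (kept_dst p k)"
proof -
  have "F ` kept_dst p k \<subseteq> {F p - int k<..F p}" unfolding kept_dst_def by auto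
  moreover have "inj_on F (kept_dst p k)" using inj by (rule inj_on_subset) (auto simp: kept_dst_def)
  ultimately show ?thesis using finite_subset finite_imageD by blast
qed

lemma kept_src_dst_nested:
  assumes "p \<in> K" shows "kept_src p k \<subseteq> kept_dst p k \<or> kept_dst p k \<subseteq> kept_src p k"
proof (rule ccontr)
  assume "\<not> ?thesis"
  then obtain x y where x: "x \<in> kept_src p k" "x \<notin> kept_dst p k"
    and y: "y \<in> kept_dst p k" "y \<notin> kept_src p k" by auto
  have "x \<in> K" "y \<in> K" "x \<le> p" using x y unfolding kept_src_def kept_dst_def by auto
  then have "F x \<le> F p - int k" "y \<le> p" "F p - int k < F y"
    using x y le_iff[OF _ assms] unfolding kept_src_def kept_dst_def by auto
  then have "y < x" using x y \<open>y \<in> K\<close> unfolding kept_src_def kept_dst_def by auto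
  then show False
    using less_iff[OF \<open>y \<in> K\<close> \<open>x \<in> K\<close>] \<open>F x \<le> F p - int k\<close> \<open>F p - int k < F y\<close> by linarith
qed

lemma card_kept_Un_le: "p \<in> K \<Longrightarrow> card (kept_src p k \<union> kept_dst p k) \<le> k"
  using kept_src_dst_nested card_kept_src[of p k] card_kept_dst[of p k]
  by (metis le_add1 subset_Un_eq sup_commute)

lemma le_card_kept_Int: "p \<in> K \<Longrightarrow> k \<le> card (kept_src p k \<inter> kept_dst p k) + deleted p k + inserted p k"
  using kept_src_dst_nested card_kept_src[of p k] card_kept_dst[of p k]
  by (metis Int_absorb1 Int_absorb2 add.commute le_add2 trans_le_add2 add_le_cancel_left le_refl add.assoc)

text \<open>The two windows of the rightmost point cover every point that is not strictly to the left
  of both of them, and the edits inside these windows are not counted again.\<close>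
lemma card_le_4_edits:
  assumes "finite P" "P \<subseteq> K"
    and "\<And>p. p \<in> P \<Longrightarrow> 0 < w p \<and> w p \<le> 4 * (deleted p (w p) + inserted p (w p))"
    and "\<And>p. p \<in> P \<Longrightarrow> p \<le> A \<and> F p \<le> B"
  shows "card P \<le> 4 * (card ({..A} - K) + card ({..B} - F ` K))"
  using assms
proof (induction "card P" arbitrary: P A B rule: less_induct)
  case less
  show ?case
  proof (cases "P = {}")
    case True
    then show ?thesis by simp
  next
    case False
    define p where "p = Max P"
    have "p \<in> P" and p_max: "\<And>q. q \<in> P \<Longrightarrow> q \<le> p"
      unfolding p_def using False less.prems(1) by auto
    have "p \<in> K" using \<open>p \<in> P\<close> less.prems(2) by auto
    define k where "k = w p"
    have "0 < k" "k \<le> 4 * (deleted p k + inserted p k)"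
      using less.prems(3)[OF \<open>p \<in> P\<close>] unfolding k_def by auto
    define P' where "P' = {q \<in> P. q \<le> p - int k \<and> F q \<le> F p - int k}"
    have "P' \<subseteq> P" unfolding P'_def by auto
    have "finite P'" using \<open>P' \<subseteq> P\<close> less.prems(1) by (rule finite_subset)
    moreover have "p \<notin> P'" using \<open>0 < k\<close> unfolding P'_def by auto
    ultimately have "card P' < card P"
      using \<open>p \<in> P\<close> \<open>P' \<subseteq> P\<close> less.prems(1) by (intro psubset_card_mono) auto
    then have IH: "card P' \<le> 4 * (card ({..p - int k} - K) + card ({..F p - int k} - F ` K))"
      using \<open>finite P'\<close> \<open>P' \<subseteq> P\<close> less.prems(2,3) by (intro less.hyps) (auto simp: P'_def)
    have "P - P' \<subseteq> kept_src p k \<union> kept_dst p k"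
      using p_max less.prems(2) le_iff[OF _ \<open>p \<in> K\<close>] unfolding P'_def kept_src_def kept_dst_def by fastforce
    then have "card (P - P') \<le> k"
      using card_kept_Un_le[OF \<open>p \<in> K\<close>, of k] finite_kept_src finite_kept_dst
      by (meson card_mono finite_UnI le_trans)
    moreover have "card P = card P' + card (P - P')"
      using card_Diff_subset[OF \<open>finite P'\<close> \<open>P' \<subseteq> P\<close>] card_mono[OF less.prems(1) \<open>P' \<subseteq> P\<close>] by linarith
    moreover have "card ({..p - int k} - K) + deleted p k \<le> card ({..A} - K)"
      unfolding deleted_def using less.prems(4)[OF \<open>p \<in> P\<close>] finite_deleted
      by (intro card_Diff_split_interval) (auto intro: finite_subset)
    moreover have "card ({..F p - int k} - F ` K) + inserted p k \<le> card ({..B} - F ` K)"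
      unfolding inserted_def using less.prems(4)[OF \<open>p \<in> P\<close>] finite_inserted
      by (intro card_Diff_split_interval) (auto intro: finite_subset)
    ultimately show ?thesis using IH \<open>k \<le> 4 * (deleted p k + inserted p k)\<close> by simp
  qed
qed

end

definition padded_nth :: "'a list \<Rightarrow> int \<Rightarrow> 'a option" where
  "padded_nth X p = (if 1 \<le> p then Some (X ! nat (p - 1)) else None)"

lemma nth_suffix_pad_take_eq_padded_nth:
  "x \<le> length X \<Longrightarrow> t < k \<Longrightarrow> suffix_pad (take x X) k ! t = padded_nth X (int x - int k + 1 + int t)"
  unfolding padded_nth_def by (auto simp: nth_suffix_pad_take nat_diff_distrib intro!: arg_cong[where f = "nth X"])

locale string_alignment = monotone_alignment K F for K F +
  fixes X Y :: "'a list"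
  assumes agree: "p \<in> K \<Longrightarrow> p \<le> int (length X) \<Longrightarrow> padded_nth X p = padded_nth Y (F p)"
begin

lemma matching_of_kept:
  assumes "int i \<in> K" "F (int i) = int j" "i \<le> length X" "j \<le> length Y"
  shows "\<exists>M. list_matching (suffix_pad (take i X) k) (suffix_pad (take j Y) k) M \<and>
    card M = card (kept_src (int i) k \<inter> kept_dst (int i) k)"
proof -
  define p0 where "p0 = int i - int k + 1"
  define q0 where "q0 = int j - int k + 1"
  define Q where "Q = kept_src (int i) k \<inter> kept_dst (int i) k"
  have Q: "p \<in> K \<and> p0 \<le> p \<and> p \<le> int i \<and> q0 \<le> F p \<and> F p \<le> int j" if "p \<in> Q" for p
    using that assms(2) unfolding Q_def kept_src_def kept_dst_def p0_def q0_def by auto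
  define h where "h = (\<lambda>p. (nat (p - p0), nat (F p - q0)))"
  have "a < length (suffix_pad (take i X) k) \<and> b < length (suffix_pad (take j Y) k) \<and>
      suffix_pad (take i X) k ! a = suffix_pad (take j Y) k ! b" if ab: "(a, b) \<in> h ` Q" for a b
  proof -
    obtain p where p: "p \<in> Q" "a = nat (p - p0)" "b = nat (F p - q0)" using ab unfolding h_def by auto
    then have "a < k" "b < k" "p0 + int a = p" "q0 + int b = F p"
      using Q[OF p(1)] unfolding p0_def q0_def by auto
    moreover have "p \<le> int (length X)" using Q[OF p(1)] assms(3) by linarith
    ultimately show ?thesis
      using agree Q[OF p(1)] assms(3,4) unfolding p0_def q0_def
      by (simp add: nth_suffix_pad_take_eq_padded_nth add.commute)
  qed
  moreover have "a < a' \<longleftrightarrow> b < b'" if ab: "(a, b) \<in> h ` Q" "(a', b') \<in> h ` Q" for a b a' b'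
  proof -
    obtain p p' where p: "p \<in> Q" "a = nat (p - p0)" "b = nat (F p - q0)"
      and p': "p' \<in> Q" "a' = nat (p' - p0)" "b' = nat (F p' - q0)" using ab unfolding h_def by auto
    then have "a < a' \<longleftrightarrow> p < p'" "b < b' \<longleftrightarrow> F p < F p'" using Q[OF p(1)] Q[OF p'(1)] by auto
    then show ?thesis using less_iff Q[OF p(1)] Q[OF p'(1)] by blast
  qed
  ultimately have "list_matching (suffix_pad (take i X) k) (suffix_pad (take j Y) k) (h ` Q)"
    unfolding list_matching_def monotone_pairs_def by blast
  moreover have "inj_on h Q"
  proof (rule inj_onI)
    fix p p' assume "p \<in> Q" "p' \<in> Q" "h p = h p'"
    then have "nat (p - p0) = nat (p' - p0)" "p0 \<le> p" "p0 \<le> p'" using Q unfolding h_def by auto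
    then show "p = p'" by linarith
  qed
  ultimately show ?thesis unfolding Q_def by (intro exI[of _ "h ` Q"]) (simp add: card_image Q_def)
qed

lemma edits_of_high_suffix_ratio:
  assumes "int i \<in> K" "F (int i) = int j" "i \<le> length X" "j \<le> length Y"
    and "1 / 4 < suffix_ratio (take i X) (take j Y) k"
  shows "0 < k" "k \<le> 4 * (deleted (int i) k + inserted (int i) k)"
proof -
  define e where "e = ED (suffix_pad (take i X) k) (suffix_pad (take j Y) k)"
  show "0 < k" using assms(5) by (cases k) (simp_all add: suffix_ratio_def)
  then have "k < 2 * e" using assms(5) unfolding suffix_ratio_def e_def by (simp add: field_simps)
  obtain M where M: "list_matching (suffix_pad (take i X) k) (suffix_pad (take j Y) k) M"
    "card M = card (kept_src (int i) k \<inter> kept_dst (int i) k)"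
    using matching_of_kept[OF assms(1-4)] by blast
  have "e + 2 * card M \<le> 2 * k" using ED_add_card_matching_le[OF M(1)] unfolding e_def by simp
  moreover have "k \<le> card M + deleted (int i) k + inserted (int i) k"
    using le_card_kept_Int[OF assms(1)] M(2) by simp
  ultimately show "k \<le> 4 * (deleted (int i) k + inserted (int i) k)"
    using \<open>k < 2 * e\<close> by simp
qed

end

text \<open>A corruption extended to all of \<open>\<int>\<close>: the padding positions \<open>p \<le> 0\<close> and the positions
  beyond the end are delivered, the latter shifted by \<open>m - n\<close>.\<close>
definition ext_kept :: "nat \<Rightarrow> nat set \<Rightarrow> int set" where
  "ext_kept n D = {p. p \<le> 0} \<union> int ` D \<union> {p. int n < p}"

definition ext_map :: "nat \<Rightarrow> nat \<Rightarrow> (nat \<Rightarrow> nat) \<Rightarrow> int \<Rightarrow> int" where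
  "ext_map n m f p = (if p \<le> 0 then p else if int n < p then p - int n + int m else int (f (nat p)))"

lemma compl_nonpos_Un_int_image_Un_above:
  "- ({p. p \<le> 0} \<union> int ` A \<union> {p. int n < p}) = int ` ({1..n} - A)"
proof
  show "- ({p. p \<le> 0} \<union> int ` A \<union> {p. int n < p}) \<subseteq> int ` ({1..n} - A)"
  proof
    fix x assume x: "x \<in> - ({p. p \<le> 0} \<union> int ` A \<union> {p. int n < p})"
    then have "x = int (nat x)" by auto
    with x have "nat x \<in> {1..n} - A" by (auto, metis imageI)
    with \<open>x = int (nat x)\<close> show "x \<in> int ` ({1..n} - A)" by blast
  qed
qed auto

lemma compl_ext_kept: "- ext_kept n D = int ` ({1..n} - D)"
  unfolding ext_kept_def by (rule compl_nonpos_Un_int_image_Un_above)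

lemma ext_map_int: "a \<in> {1..n} \<Longrightarrow> ext_map n m f (int a) = int (f a)"
  unfolding ext_map_def by simp

lemma ext_map_image:
  assumes "D \<subseteq> {1..n}"
  shows "ext_map n m f ` ext_kept n D = {q. q \<le> 0} \<union> int ` f ` D \<union> {q. int m < q}"
proof -
  have "ext_map n m f ` {p. p \<le> 0} = {q. q \<le> 0}"
    unfolding ext_map_def by (auto simp: image_iff)
  moreover have "ext_map n m f ` int ` D = int ` f ` D"
    unfolding image_image using assms by (intro image_cong) (auto simp: ext_map_int)
  moreover have "ext_map n m f ` {p. int n < p} = {q. int m < q}"
  proof (rule set_eqI, rule iffI)
    fix q assume "q \<in> {q. int m < q}"
    then have "ext_map n m f (q - int m + int n) = q" "q - int m + int n \<in> {p. int n < p}"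
      unfolding ext_map_def by auto
    then show "q \<in> ext_map n m f ` {p. int n < p}" by (metis imageI)
  qed (auto simp: ext_map_def)
  ultimately show ?thesis unfolding ext_kept_def image_Un by simp
qed

lemma compl_ext_map_image:
  "D \<subseteq> {1..n} \<Longrightarrow> - ext_map n m f ` ext_kept n D = int ` ({1..m} - f ` D)"
  unfolding ext_map_image by (rule compl_nonpos_Un_int_image_Un_above)

lemma strict_mono_on_ext_map:
  assumes "D \<subseteq> {1..n}" "f ` D \<subseteq> {1..m}" "strict_mono_on D f"
  shows "strict_mono_on (ext_kept n D) (ext_map n m f)"
proof (rule strict_mono_onI)
  fix x y assume "x \<in> ext_kept n D" "y \<in> ext_kept n D" "x < y"
  then show "ext_map n m f x < ext_map n m f y"
    using assms unfolding ext_kept_def ext_map_def strict_mono_on_def by force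
qed

lemma string_alignment_ext:
  assumes "valid_corruption \<delta> S St D f"
  shows "string_alignment (ext_kept (length S) D) (ext_map (length S) (length St) f) S St"
proof -
  have D: "D \<subseteq> {1..length S}" "f ` D \<subseteq> {1..length St}" "strict_mono_on D f"
    and agree: "\<And>i. i \<in> D \<Longrightarrow> St ! (f i - 1) = S ! (i - 1)"
    using assms unfolding valid_corruption_def by auto
  show ?thesis
  proof
    show "strict_mono_on (ext_kept (length S) D) (ext_map (length S) (length St) f)"
      using D by (rule strict_mono_on_ext_map)
    show "finite (- ext_kept (length S) D)"
      unfolding compl_ext_kept by simp
    show "finite (- ext_map (length S) (length St) f ` ext_kept (length S) D)"
      unfolding compl_ext_map_image[OF D(1)] by simp
    fix p assume "p \<in> ext_kept (length S) D" "p \<le> int (length S)"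
    then show "padded_nth S p = padded_nth St (ext_map (length S) (length St) f p)"
      using D agree unfolding ext_kept_def ext_map_def padded_nth_def
      by (force simp: nat_diff_distrib)
  qed
qed

lemma high_RSD_card_le:
  assumes "valid_corruption \<delta> S St D f"
  shows "card {i \<in> D. 1 / 4 < RSD (take i S) (take (f i) St)} \<le>
    4 * ((length S - card D) + (length St - card D))"
proof -
  define n m where "n = length S" and "m = length St"
  define H where "H = {i \<in> D. 1 / 4 < RSD (take i S) (take (f i) St)}"
  have D: "D \<subseteq> {1..n}" "f ` D \<subseteq> {1..m}" "strict_mono_on D f"
    using assms unfolding valid_corruption_def n_def m_def by auto
  interpret string_alignment "ext_kept n D" "ext_map n m f" S St
    using string_alignment_ext[OF assms] unfolding n_def m_def .
  have "\<forall>i \<in> H. \<exists>k. 1 / 4 < suffix_ratio (take i S) (take (f i) St) k"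
    unfolding H_def less_RSD_iff by blast
  then obtain w where w: "\<And>i. i \<in> H \<Longrightarrow> 1 / 4 < suffix_ratio (take i S) (take (f i) St) (w i)"
    using bchoice by metis
  have "card (int ` H) \<le> 4 * (card ({..int n} - ext_kept n D) + card ({..int m} - ext_map n m f ` ext_kept n D))"
  proof (rule card_le_4_edits)
    show "finite (int ` H)" using D(1) unfolding H_def by (auto intro: finite_subset)
    show "int ` H \<subseteq> ext_kept n D" unfolding H_def ext_kept_def by auto
    fix p assume "p \<in> int ` H"
    then obtain i where i: "i \<in> H" "p = int i" by blast
    then have "i \<in> {1..n}" "f i \<in> {1..m}" using D unfolding H_def by auto
    then have "int i \<in> ext_kept n D" "ext_map n m f (int i) = int (f i)" "i \<le> length S" "f i \<le> length St"
      using i(1) ext_map_int unfolding H_def ext_kept_def n_def m_def by auto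
    from edits_of_high_suffix_ratio[OF this w[OF i(1)]] \<open>i \<in> {1..n}\<close> \<open>f i \<in> {1..m}\<close>
    show "0 < w (nat p) \<and> w (nat p) \<le> 4 * (deleted p (w (nat p)) + inserted p (w (nat p)))"
      "p \<le> int n \<and> ext_map n m f p \<le> int m"
      using i(2) \<open>ext_map n m f (int i) = int (f i)\<close> by auto
  qed
  moreover have "{..int n} - ext_kept n D = int ` ({1..n} - D)"
    using compl_ext_kept[of n D] unfolding ext_kept_def by auto
  moreover have "{..int m} - ext_map n m f ` ext_kept n D = int ` ({1..m} - f ` D)"
    using compl_ext_map_image[OF D(1), of m f] unfolding ext_map_image[OF D(1)] by auto
  moreover have "card (f ` D) = card D"
    using D(3) by (intro card_image strict_mono_on_imp_inj_on)
  moreover have "finite D" using D(1) by (rule finite_subset) simp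
  ultimately show ?thesis
    using D(1,2) unfolding H_def n_def m_def by (simp add: card_image card_Diff_subset)
qed

section \<open>Misdecodings at small relative suffix distance\<close>

definition window_pairs :: "nat \<Rightarrow> nat \<Rightarrow> (nat \<times> nat) set" where
  "window_pairs v g = {(a, b). a \<le> v \<and> v < a + g \<and> v < b \<and> b \<le> v + g}"

lemma window_pairs_ordered:
  "u + max h g \<le> v \<Longrightarrow> (a, b) \<in> window_pairs u h \<Longrightarrow> (a', b') \<in> window_pairs v g \<Longrightarrow>
     a < a' \<and> b < b'"
  unfolding window_pairs_def by auto

lemma monotone_pairs_Un:
  assumes "monotone_pairs A" "monotone_pairs B"
    and "\<And>a b a' b'. (a, b) \<in> A \<Longrightarrow> (a', b') \<in> B \<Longrightarrow> a < a' \<and> b < b' \<or> a' < a \<and> b' < b"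
  shows "monotone_pairs (A \<union> B)"
  using assms unfolding monotone_pairs_def by (metis Un_iff order.asym)

lemma card_near_window_le:
  assumes "\<And>p. p \<in> P \<Longrightarrow> p = v p \<or> p = v p + g p"
    and "\<And>p. p \<in> P \<Longrightarrow> g p \<le> G \<and> c < v p + G \<and> v p < c + G"
  shows "card P \<le> 3 * G"
proof -
  have "P \<subseteq> {c + 1 - G..<c + 2 * G}"
    using assms by fastforce
  then have "card P \<le> card {c + 1 - G..<c + 2 * G}"
    by (intro card_mono) auto
  then show ?thesis by simp
qed

text \<open>The windows of the points are packed greedily, largest first, in the manner of the
  Vitali covering lemma: a chosen window of radius \<open>g\<close> costs at most \<open>3 g\<close> points and
  contributes at least \<open>g / 2\<close> pairs.\<close>
lemma greedy_window_packing:
  assumes "finite P"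
    and "\<And>p. p \<in> P \<Longrightarrow> p = v p \<or> p = v p + g p"
    and "\<And>p. p \<in> P \<Longrightarrow> 0 < g p"
    and "\<And>p. p \<in> P \<Longrightarrow> Ml p \<subseteq> window_pairs (v p) (g p)"
    and "\<And>p. p \<in> P \<Longrightarrow> monotone_pairs (Ml p)"
    and "\<And>p. p \<in> P \<Longrightarrow> finite (Ml p) \<and> g p \<le> 2 * card (Ml p)"
  shows "\<exists>M \<subseteq> (\<Union>p\<in>P. Ml p). monotone_pairs M \<and> card P \<le> 6 * card M"
  using assms
proof (induction "card P" arbitrary: P rule: less_induct)
  case less
  show ?case
  proof (cases "P = {}")
    case True
    then show ?thesis by (auto simp: monotone_pairs_def)
  next
    case False
    have "Max (g ` P) \<in> g ` P" using False less.prems(1) by simp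
    then obtain C where C: "C \<in> P" "g C = Max (g ` P)" by auto
    have gC: "\<And>p. p \<in> P \<Longrightarrow> g p \<le> g C"
      using C(2) less.prems(1) by simp
    define P' where "P' = {p \<in> P. v p + g C \<le> v C \<or> v C + g C \<le> v p}"
    have "P' \<subseteq> P" unfolding P'_def by auto
    moreover have "C \<notin> P'" using less.prems(3)[OF C(1)] unfolding P'_def by auto
    ultimately have "card P' < card P"
      using C(1) less.prems(1) by (intro psubset_card_mono) auto
    moreover have "finite P'" using \<open>P' \<subseteq> P\<close> less.prems(1) by (rule finite_subset)
    ultimately have "\<exists>M \<subseteq> (\<Union>p\<in>P'. Ml p). monotone_pairs M \<and> card P' \<le> 6 * card M"
      using \<open>P' \<subseteq> P\<close> by (intro less.hyps) (meson less.prems subsetD)+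
    then obtain M' where M': "M' \<subseteq> (\<Union>p\<in>P'. Ml p)" "monotone_pairs M'" "card P' \<le> 6 * card M'"
      by blast
    have ordered: "a < a' \<and> b < b' \<or> a' < a \<and> b' < b" if ab: "(a, b) \<in> M'" and ab': "(a', b') \<in> Ml C" for a b a' b'
    proof -
      obtain p where p: "p \<in> P'" "(a, b) \<in> Ml p" using M'(1) ab by blast
      then have wp: "(a, b) \<in> window_pairs (v p) (g p)" and "g p \<le> g C"
        using less.prems(4) gC \<open>P' \<subseteq> P\<close> by auto
      then have max: "max (g p) (g C) = g C" "max (g C) (g p) = g C" by auto
      have wC: "(a', b') \<in> window_pairs (v C) (g C)" using less.prems(4)[OF C(1)] ab' by blast
      from p(1) consider "v p + g C \<le> v C" | "v C + g C \<le> v p" unfolding P'_def by blast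
      then show ?thesis
      proof cases
        case 1
        then show ?thesis using window_pairs_ordered[OF _ wp wC] max by simp
      next
        case 2
        then show ?thesis using window_pairs_ordered[OF _ wC wp] max by simp
      qed
    qed
    define M where "M = M' \<union> Ml C"
    have "M \<subseteq> (\<Union>p\<in>P. Ml p)" using M'(1) \<open>P' \<subseteq> P\<close> C(1) unfolding M_def by blast
    moreover have "monotone_pairs M"
      unfolding M_def using M'(2) less.prems(5)[OF C(1)] ordered by (rule monotone_pairs_Un)
    moreover have "card M = card M' + card (Ml C)"
    proof -
      have "finite M'" using M'(1) less.prems(1,6) \<open>P' \<subseteq> P\<close> by (meson finite_UN_I finite_subset subsetD)
      moreover have "M' \<inter> Ml C = {}" using ordered by fastforce
      ultimately show ?thesis unfolding M_def using less.prems(6)[OF C(1)] by (simp add: card_Un_disjoint)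
    qed
    moreover have "card (P - P') \<le> 3 * g C"
      by (rule card_near_window_le[where v = v and g = g and c = "v C"])
        (use less.prems(2) gC in \<open>auto simp: P'_def\<close>)
    moreover have "card P = card P' + card (P - P')"
      using \<open>P' \<subseteq> P\<close> less.prems(1) by (metis card_Diff_subset card_mono finite_subset le_add_diff_inverse)
    ultimately show ?thesis
      using M'(3) less.prems(6)[OF C(1)] by (intro exI[of _ M]) linarith
  qed
qed

definition self_pairs :: "'a list \<Rightarrow> (nat \<times> nat) set" where
  "self_pairs S = {(a, b). a \<in> {1..length S} \<and> b \<in> {1..length S} \<and> S ! (a - 1) = S ! (b - 1)}"

lemma monotone_self_matching_iff:
  "monotone_self_matching S M \<longleftrightarrow> M \<subseteq> self_pairs S \<and> monotone_pairs M"
  unfolding monotone_self_matching_def self_pairs_def monotone_pairs_def by fastforce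

text \<open>Composing the optimal alignments of both suffixes with \<open>W\<close> matches \<open>S\<close> with itself
  across the boundary \<open>v\<close>.\<close>
lemma self_matching_in_window:
  fixes S :: "'a list" and W :: "'a option list"
  assumes len: "v + g \<le> length S" "length W = g"
    and close: "2 * ED (suffix_pad (take v S) g) W \<le> g" "2 * ED (suffix_pad (take (v + g) S) g) W \<le> g"
  shows "\<exists>M \<subseteq> window_pairs v g \<inter> self_pairs S. monotone_pairs M \<and> finite M \<and> g \<le> 2 * card M"
proof -
  define X1 where "X1 = suffix_pad (take v S) g"
  define X2 where "X2 = suffix_pad (take (v + g) S) g"
  obtain M1 where M1: "list_matching X1 W M1" "length X1 + length W \<le> ED X1 W + 2 * card M1"
    using ex_matching_ED_le by blast
  obtain M2 where M2: "list_matching X2 W M2" "length X2 + length W \<le> ED X2 W + 2 * card M2"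
    using ex_matching_ED_le by blast
  obtain N where N: "list_matching X1 X2 N" "card M1 + card M2 \<le> card N + length W"
    using list_matching_compose[OF M1(1) M2(1)] by blast
  have "3 * g \<le> 4 * card M1" "3 * g \<le> 4 * card M2"
    using M1(2) M2(2) close len(2) unfolding X1_def X2_def by simp_all
  then have card_N: "g \<le> 2 * card N" using N(2) len(2) by linarith
  have N_pairs: "t < g \<and> t' < g \<and> g \<le> t + v \<and> S ! (t + v - g) = S ! (t' + v)" if "(t, t') \<in> N" for t t'
  proof -
    have "t < g" "t' < g" "X1 ! t = X2 ! t'"
      using list_matchingD[OF N(1) that] unfolding X1_def X2_def by auto
    then show ?thesis
      using len(1) unfolding X1_def X2_def by (auto simp: nth_suffix_pad_take split: if_splits)
  qed
  define h where "h = map_prod (\<lambda>t. t + v + 1 - g) (\<lambda>t'. t' + v + 1)"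
  have "inj_on h N"
    unfolding h_def by (rule inj_onI) (use N_pairs in \<open>fastforce simp: map_prod_def split: prod.splits\<close>)
  then have "card (h ` N) = card N" by (rule card_image)
  moreover have "h ` N \<subseteq> window_pairs v g \<inter> self_pairs S"
  proof
    fix p assume "p \<in> h ` N"
    then obtain t t' where "(t, t') \<in> N" "p = (t + v + 1 - g, t' + v + 1)" unfolding h_def by auto
    then show "p \<in> window_pairs v g \<inter> self_pairs S"
      using N_pairs[of t t'] len(1) unfolding window_pairs_def self_pairs_def by (auto simp: Suc_diff_le)
  qed
  moreover have "monotone_pairs (h ` N)"
    unfolding monotone_pairs_def h_def
    using N_pairs monotone_pairsD[OF list_matching_monotone[OF N(1)]] by fastforce
  moreover have "finite (h ` N)" using list_matching_finite[OF N(1)] by simp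
  ultimately show ?thesis using card_N by (intro exI[of _ "h ` N"]) simp
qed

lemma window_self_matching_of_misdecoding:
  fixes S Y :: "'a list"
  assumes "i \<le> length S" "l \<le> length S" "l \<noteq> i"
    and "RSD (take l S) Y \<le> RSD (take i S) Y" "RSD (take i S) Y \<le> 1 / 4"
  defines "g \<equiv> max i l - min i l"
  shows "\<exists>M \<subseteq> window_pairs (min i l) g \<inter> self_pairs S. monotone_pairs M \<and> finite M \<and> g \<le> 2 * card M"
proof (rule self_matching_in_window)
  have "0 < g" using assms(3) unfolding g_def by linarith
  have "2 * ED (suffix_pad (take x S) g) (suffix_pad Y g) \<le> g" if "x = i \<or> x = l" for x
  proof -
    have "suffix_ratio (take x S) Y g \<le> 1 / 4"
      using suffix_ratio_le_RSD[OF \<open>0 < g\<close>, of "take x S" Y] that assms(4,5) by auto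
    then show ?thesis using \<open>0 < g\<close> by (simp add: suffix_ratio_def field_simps)
  qed
  moreover have "min i l + g = max i l" unfolding g_def by simp
  ultimately show "2 * ED (suffix_pad (take (min i l) S) g) (suffix_pad Y g) \<le> g"
    "2 * ED (suffix_pad (take (min i l + g) S) g) (suffix_pad Y g) \<le> g"
    by (simp_all add: min_def max_def)
  show "min i l + g \<le> length S" "length (suffix_pad Y g) = g"
    using assms(1,2) unfolding g_def by auto
qed

lemma low_RSD_misdecodings_card_le:
  assumes "D \<subseteq> {1..length S}" "f ` D \<subseteq> {1..length St}" "min_RSD_decoding S St dec"
  shows "\<exists>M. monotone_self_matching S M \<and> (\<forall>(a, b) \<in> M. a < b) \<and>
    card {i \<in> D. dec (f i) \<noteq> i \<and> RSD (take i S) (take (f i) St) \<le> 1 / 4} \<le> 6 * card M"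
proof -
  define L where "L = {i \<in> D. dec (f i) \<noteq> i \<and> RSD (take i S) (take (f i) St) \<le> 1 / 4}"
  define v where "v i = min i (dec (f i))" for i
  define g where "g i = max i (dec (f i)) - min i (dec (f i))" for i
  have "\<exists>M \<subseteq> window_pairs (v i) (g i) \<inter> self_pairs S. monotone_pairs M \<and> finite M \<and> g i \<le> 2 * card M"
    if "i \<in> L" for i
  proof -
    have "f i \<in> {1..length St}" "i \<in> {1..length S}" using that assms(1,2) unfolding L_def by auto
    then have "dec (f i) \<in> {1..length S}"
      "RSD (take (dec (f i)) S) (take (f i) St) \<le> RSD (take i S) (take (f i) St)"
      using assms(3) unfolding min_RSD_decoding_def by blast+
    then show ?thesis
      using that \<open>i \<in> {1..length S}\<close> unfolding L_def v_def g_def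
      by (intro window_self_matching_of_misdecoding) auto
  qed
  then obtain Ml where Ml: "\<And>i. i \<in> L \<Longrightarrow> Ml i \<subseteq> window_pairs (v i) (g i) \<inter> self_pairs S \<and>
      monotone_pairs (Ml i) \<and> finite (Ml i) \<and> g i \<le> 2 * card (Ml i)"
    by metis
  have "finite L" using assms(1) unfolding L_def by (auto intro: finite_subset)
  then obtain M where M: "M \<subseteq> (\<Union>i\<in>L. Ml i)" "monotone_pairs M" "card L \<le> 6 * card M"
    using greedy_window_packing[of L v g Ml] Ml unfolding L_def v_def g_def by fastforce
  then have "M \<subseteq> self_pairs S" and "\<forall>(a, b) \<in> M. a < b"
    using Ml unfolding window_pairs_def by fastforce+
  then show ?thesis using M unfolding L_def monotone_self_matching_iff by blast
qed

theorem theorem34: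
  fixes S St :: "'a list" and \<epsilon> \<delta> :: real and D :: "nat set" and f dec :: "nat \<Rightarrow> nat"
  assumes "self_matching \<epsilon> S"
    and "valid_corruption \<delta> S St D f"
    and "min_RSD_decoding S St dec"
  shows "real (card {i\<in>D. dec (f i) \<noteq> i}) \<le> real (length S) * (4 * \<delta> + 6 * \<epsilon>)"
proof -
  let ?r = "\<lambda>i. RSD (take i S) (take (f i) St)"
  define high low where "high = {i \<in> D. 1 / 4 < ?r i}" and "low = {i \<in> D. dec (f i) \<noteq> i \<and> ?r i \<le> 1 / 4}"
  have D: "D \<subseteq> {1..length S}" "f ` D \<subseteq> {1..length St}"
    and edits: "real ((length S - card D) + (length St - card D)) \<le> real (length S) * \<delta>"
    using assms(2) unfolding valid_corruption_def by auto
  have "finite D" using D(1) by (rule finite_subset) simp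
  then have "card {i \<in> D. dec (f i) \<noteq> i} \<le> card (high \<union> low)"
    unfolding high_def low_def by (intro card_mono) auto
  also have "\<dots> \<le> card high + card low" by (rule card_Un_le)
  finally have "card {i \<in> D. dec (f i) \<noteq> i} \<le> card high + card low" .
  moreover have "card high \<le> 4 * ((length S - card D) + (length St - card D))"
    unfolding high_def by (rule high_RSD_card_le[OF assms(2)])
  then have "real (card high) \<le> 4 * real ((length S - card D) + (length St - card D))"
    by (metis of_nat_le_iff of_nat_mult of_nat_numeral)
  moreover obtain M where M: "monotone_self_matching S M" "\<forall>(a, b) \<in> M. a < b" "card low \<le> 6 * card M"
    using low_RSD_misdecodings_card_le[OF D assms(3)] unfolding low_def by blast
  moreover have "real (card {(a, b) \<in> M. a \<noteq> b}) < \<epsilon> * real (length S)"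
    using assms(1) M(1) unfolding self_matching_def by blast
  moreover have "{(a, b) \<in> M. a \<noteq> b} = M" using M(2) by auto
  ultimately show ?thesis using edits by (simp add: algebra_simps)
qed

end
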